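(* Let $i_{\max}=\max_k i_k$ and, for $0\le i\le i_{\max}$, $m_i=\sum_{k=1}^s\min(i,i_k)$ (so $0=m_0<m_1<\dots<m_{i_{\max}}=n$). For every $j\in\{1,\dots,n\}$, the integer $j-\deg_{\mathfrak n^-}F_j$ is the unique $i\in\{1,\dots,i_{\max}\}$ with $m_{i-1}<j\le m_i$. Equivalently, $\deg_{\mathfrak n^-}F_1=0$ and for $1\le j\le n-1$: $\deg_{\mathfrak n^-}F_{j+1}=\deg_{\mathfrak n^-}F_j$ if $j=m_i$ for some $i\in\{0,\dots,i_{\max}-1\}$, and $\deg_{\mathfrak n^-}F_{j+1}=\deg_{\mathfrak n^-}F_j+1$ otherwise.
   Context: Setup (parabolic contractions of $\mathfrak{gl}_n$). Let $\mathbb C$ be an algebraically closed field of characteristic $0$ and $n\ge 2$. Let $e_{p,q}$ ($1\le p,q\le n$) be the elementary matrices of $\mathfrak{gl}_n$ and $I=\{1,\dots,n\}$. Fix integers $0=\iota_0<\iota_1<\dots<\iota_{s-1}<\iota_s=n$ with $s\ge 2$. Put $I_k=\{\iota_{k-1}+1,\dots,\iota_k\}$, $i_k=|I_k|$ ($1\le k\le s$), and for $x\in I$ let $k(x)$ be the index with $x\in I_k$. Let $\mathfrak p=\operatorname{span}\{e_{p,q}: k(p)\le k(q)\}$ and $\mathfrak n^-=\operatorname{span}\{e_{p,q}: k(p)>k(q)\}$. The parabolic contraction $\mathfrak q=\mathfrak p\ltimes\mathfrak n^-$ is the vector space $\mathfrak{gl}_n$ with the Lie bracket $[p_1,p_2]=p_1p_2-p_2p_1$,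 $[p,x]=\pi_{\mathfrak n^-}(px-xp)$, $[x,y]=0$ for $p,p_1,p_2\in\mathfrak p$, $x,y\in\mathfrak n^-$, where $\pi_{\mathfrak n^-}$ is the projection onto $\mathfrak n^-$ along $\mathfrak p$. $S(\mathfrak q)$ is the polynomial algebra in the $e_{p,q}$. The $\mathfrak n^-$-degree of a monomial in the $e_{p,q}$ is the number of its factors lying in $\mathfrak n^-$; $\deg_{\mathfrak n^-}F$ is the maximum over monomials of $F$. For $J\subset I$, $\Delta_J=\sum_{\sigma\in\mathfrak S(J)}\varepsilon(\sigma)\prod_{l\in J}e_{l,\sigma(l)}$, and $F_j=\sum_{|J|=j}\Delta_J$. *)

theory Defs
  imports "HOL-Library.Poly_Mapping" "HOL-Combinatorics.Permutations"
begin

text \<open>Block data: iota :: nat => nat with iota 0 = 0 < iota 1 < ... < iota s = n.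
  Variables e_{p,q} are indexed by pairs (p,q); monomials are finitely supported
  exponent maps (nat * nat) =>0 nat; polynomials are finitely supported maps from
  monomials to coefficients.\<close>

definition blk :: "(nat \<Rightarrow> nat) \<Rightarrow> nat \<Rightarrow> nat" where
  "blk iota x = (LEAST k. x \<le> iota k)"

definition blksize :: "(nat \<Rightarrow> nat) \<Rightarrow> nat \<Rightarrow> nat" where
  "blksize iota k = iota k - iota (k - 1)"

definition imax :: "(nat \<Rightarrow> nat) \<Rightarrow> nat \<Rightarrow> nat" where
  "imax iota s = Max (blksize iota ` {1..s})"

definition mseq :: "(nat \<Rightarrow> nat) \<Rightarrow> nat \<Rightarrow> nat \<Rightarrow> nat" where
  "mseq iota s i = (\<Sum>k=1..s. min i (blksize iota k))"

definition permmon :: "nat set \<Rightarrow> (nat \<Rightarrow> nat) \<Rightarrow> (nat \<times> nat) \<Rightarrow>\<^sub>0 nat" where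
  "permmon J \<sigma> = (\<Sum>l\<in>J. Poly_Mapping.single (l, \<sigma> l) 1)"

definition Delta :: "nat set \<Rightarrow> ((nat \<times> nat) \<Rightarrow>\<^sub>0 nat) \<Rightarrow>\<^sub>0 'a::comm_ring_1" where
  "Delta J = (\<Sum>\<sigma>\<in>{\<sigma>. \<sigma> permutes J}. Poly_Mapping.single (permmon J \<sigma>) (of_int (sign \<sigma>)))"

definition Fpol :: "nat \<Rightarrow> nat \<Rightarrow> ((nat \<times> nat) \<Rightarrow>\<^sub>0 nat) \<Rightarrow>\<^sub>0 'a::comm_ring_1" where
  "Fpol n j = (\<Sum>J\<in>{J. J \<subseteq> {1..n} \<and> card J = j}. Delta J)"

definition mon_ndeg :: "(nat \<Rightarrow> nat) \<Rightarrow> ((nat \<times> nat) \<Rightarrow>\<^sub>0 nat) \<Rightarrow> nat" where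
  "mon_ndeg iota m = (\<Sum>pq\<in>Poly_Mapping.keys m. if blk iota (fst pq) > blk iota (snd pq) then Poly_Mapping.lookup m pq else 0)"

definition ndeg :: "(nat \<Rightarrow> nat) \<Rightarrow> (((nat \<times> nat) \<Rightarrow>\<^sub>0 nat) \<Rightarrow>\<^sub>0 'a::zero) \<Rightarrow> nat" where
  "ndeg iota F = Max (mon_ndeg iota ` Poly_Mapping.keys F)"

end

theory Submission
  imports Defs "HOL-Combinatorics.Cycles"
begin

text \<open>The monomials of \<open>F j\<close> are the products of the \<open>e(l, \<sigma> l)\<close>, \<open>l \<in> J\<close>, for
  \<open>card J = j\<close> and \<open>\<sigma>\<close> a permutation of \<open>J\<close>; distinct pairs \<open>(J, \<sigma>)\<close> give distinct
  monomials, so the \<open>n\<^sup>-\<close>-degree of \<open>F j\<close> is the largest number of descents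
  \<open>k(\<sigma> l) < k(l)\<close> of such a \<open>\<sigma>\<close>. Let \<open>t\<close> be the number of the remaining points (ascents)
  and \<open>m(i - 1) < j \<le> m(i)\<close>. Following \<open>\<sigma>\<close> from a point of \<open>J\<close>, the block index strictly
  decreases until an ascent is reached, and on each block the first ascent reached determines the
  starting point; so each block contains at most \<open>min t (i\<^sub>k)\<close> points of \<open>J\<close>, whence
  \<open>j \<le> m(t)\<close> and \<open>t \<ge> i\<close>. Conversely, take \<open>J\<close> among the points whose position inside
  their block is at most \<open>i\<close>, and let \<open>\<sigma>\<close> cycle through \<open>J\<close> sorted by position and, for equal
  positions, by decreasing index. A step between points of equal position then moves to an earlier
  block, so the ascents have pairwise distinct positions and \<open>t \<le> i\<close>. Hence the degree is
  \<open>j - i\<close>.\<close>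

lemma funpow_strict_descent:
  fixes f :: "'a \<Rightarrow> nat"
  assumes "\<And>m'. m' < m \<Longrightarrow> f (\<sigma> ((\<sigma> ^^ m') l)) < f ((\<sigma> ^^ m') l)"
  shows "f ((\<sigma> ^^ m) l) + m \<le> f l"
  using assms by (induction m) (auto simp: less_Suc_eq, fastforce)

lemma ex_funpow_not_descending:
  fixes f :: "'a \<Rightarrow> nat"
  shows "\<exists>m. f ((\<sigma> ^^ m) l) \<le> f (\<sigma> ((\<sigma> ^^ m) l))"
proof (rule ccontr)
  assume "\<not> ?thesis"
  then have "f ((\<sigma> ^^ Suc (f l)) l) + Suc (f l) \<le> f l"
    by (intro funpow_strict_descent) (simp add: not_le)
  then show False by simp
qed

lemma card_fibre_le_card_ascents:
  fixes f :: "'a \<Rightarrow> nat"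
  assumes "finite J" and perm: "\<sigma> permutes J"
  shows "card {l\<in>J. f l = k} \<le> card {l\<in>J. f l \<le> f (\<sigma> l)}"
proof -
  define M where "M l = (LEAST m. f ((\<sigma> ^^ m) l) \<le> f (\<sigma> ((\<sigma> ^^ m) l)))" for l
  define g where "g l = (\<sigma> ^^ M l) l" for l
  have descent: "f ((\<sigma> ^^ m) l) + m \<le> f l" if "m \<le> M l" for l m
    using that unfolding M_def
    by (intro funpow_strict_descent) (metis (mono_tags) not_le not_less_Least order_less_le_trans)
  have g_eq: "l = l'" if "f l = f l'" "g l = g l'" "M l \<le> M l'" for l l'
  proof -
    define d where "d = M l' - M l"
    have "(\<sigma> ^^ M l) ((\<sigma> ^^ d) l') = (\<sigma> ^^ M l) l"
      using that(2,3) funpow_add[of "M l" d \<sigma>] by (simp add: g_def d_def)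
    then have "(\<sigma> ^^ d) l' = l"
      using permutes_funpow[OF perm] permutes_inj by (metis injD)
    moreover have "f ((\<sigma> ^^ d) l') + d \<le> f l'" by (rule descent) (simp add: d_def)
    ultimately have "d = 0" using that(1) by simp
    with \<open>(\<sigma> ^^ d) l' = l\<close> show ?thesis by simp
  qed
  have "inj_on g {l\<in>J. f l = k}"
    by (rule inj_onI) (metis (mono_tags) g_eq mem_Collect_eq nle_le)
  moreover have "g l \<in> J \<and> f (g l) \<le> f (\<sigma> (g l))" if "l \<in> J" for l
    unfolding g_def M_def
    using permutes_in_image[OF permutes_funpow[OF perm]] that LeastI_ex[OF ex_funpow_not_descending] by simp
  ultimately show ?thesis
    by (intro card_inj_on_le) (use \<open>finite J\<close> in auto)
qed

lemma keys_sum_single: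
  assumes "finite A" and "inj_on \<phi> A" and "\<And>a. a \<in> A \<Longrightarrow> c a \<noteq> 0"
  shows "Poly_Mapping.keys (\<Sum>a\<in>A. Poly_Mapping.single (\<phi> a) (c a)) = \<phi> ` A"
proof -
  have "Poly_Mapping.lookup (\<Sum>a\<in>A. Poly_Mapping.single (\<phi> a) (c a)) (\<phi> b) = c b" if "b \<in> A" for b
  proof -
    have "(\<Sum>a\<in>A. c a when \<phi> a = \<phi> b) = (\<Sum>a\<in>A. if a = b then c b else 0)"
      using assms(2) that by (intro sum.cong) (auto simp: when_def dest: inj_onD)
    then show ?thesis using assms(1) that by (simp add: lookup_sum lookup_single)
  qed
  moreover have "Poly_Mapping.keys (\<Sum>a\<in>A. Poly_Mapping.single (\<phi> a) (c a)) \<subseteq> \<phi> ` A"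
    using keys_sum[of "\<lambda>a. Poly_Mapping.single (\<phi> a) (c a)" A] by auto
  ultimately show ?thesis using assms(3) by (force simp: in_keys_iff)
qed

lemma lookup_permmon:
  assumes "finite J"
  shows "Poly_Mapping.lookup (permmon J \<sigma>) (a, b) = (if a \<in> J \<and> b = \<sigma> a then 1 else 0)"
proof -
  have "Poly_Mapping.lookup (permmon J \<sigma>) (a, b) = (\<Sum>l\<in>J. if l = a then (if b = \<sigma> a then 1 else 0) else 0)"
    unfolding permmon_def lookup_sum lookup_single when_def by (intro sum.cong) auto
  then show ?thesis using assms by (simp add: sum.delta')
qed

lemma keys_permmon:
  assumes "finite J"
  shows "Poly_Mapping.keys (permmon J \<sigma>) = (\<lambda>l. (l, \<sigma> l)) ` J"
  using lookup_permmon[OF assms] by (auto simp: in_keys_iff split: if_splits)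

lemma permmon_inj:
  assumes "\<sigma> permutes J" "\<sigma>' permutes J'" "finite J" "finite J'" "permmon J \<sigma> = permmon J' \<sigma>'"
  shows "J = J'" and "\<sigma> = \<sigma>'"
proof -
  have keys: "(\<lambda>l. (l, \<sigma> l)) ` J = (\<lambda>l. (l, \<sigma>' l)) ` J'"
    using keys_permmon[OF assms(3), of \<sigma>] keys_permmon[OF assms(4), of \<sigma>'] assms(5) by simp
  then have "fst ` (\<lambda>l. (l, \<sigma> l)) ` J = fst ` (\<lambda>l. (l, \<sigma>' l)) ` J'" by simp
  then show "J = J'" by (simp add: image_image)
  show "\<sigma> = \<sigma>'"
  proof
    fix x
    show "\<sigma> x = \<sigma>' x"
    proof (cases "x \<in> J")
      case True
      then have "(x, \<sigma> x) \<in> (\<lambda>l. (l, \<sigma>' l)) ` J'" using keys by blast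
      then show ?thesis by auto
    next
      case False
      then show ?thesis using \<open>J = J'\<close> assms(1,2) by (simp add: permutes_not_in)
    qed
  qed
qed

lemma keys_Fpol:
  "Poly_Mapping.keys (Fpol n j :: _ \<Rightarrow>\<^sub>0 'a::comm_ring_1)
     = {permmon J \<sigma> | J \<sigma>. J \<subseteq> {1..n} \<and> card J = j \<and> \<sigma> permutes J}"
proof -
  define P where "P = Sigma {J. J \<subseteq> {1..n} \<and> card J = j} (\<lambda>J. {\<sigma>. \<sigma> permutes J})"
  have fin_sets: "finite {J. J \<subseteq> {1..n} \<and> card J = j}" by (rule finite_subset[of _ "Pow {1..n}"]) auto
  have fin_J: "finite J" if "J \<subseteq> {1..n}" for J :: "nat set" using that finite_subset by blast
  have "Fpol n j = (\<Sum>p\<in>P. Poly_Mapping.single (permmon (fst p) (snd p)) (of_int (sign (snd p)) :: 'a))"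
    unfolding Fpol_def Delta_def P_def
    by (subst sum.Sigma) (auto simp: fin_sets fin_J finite_permutations split_def)
  also have "Poly_Mapping.keys \<dots> = (\<lambda>p. permmon (fst p) (snd p)) ` P"
  proof (rule keys_sum_single)
    show "finite P" unfolding P_def by (auto simp: fin_sets fin_J finite_permutations)
    show "inj_on (\<lambda>p. permmon (fst p) (snd p)) P"
      by (rule inj_onI) (auto simp: P_def fin_J dest: permmon_inj)
    show "of_int (sign (snd p)) \<noteq> (0::'a)" for p by (simp add: sign_def)
  qed
  also have "\<dots> = {permmon J \<sigma> | J \<sigma>. J \<subseteq> {1..n} \<and> card J = j \<and> \<sigma> permutes J}"
    unfolding P_def by force
  finally show ?thesis .
qed

definition descents :: "(nat \<Rightarrow> nat) \<Rightarrow> nat set \<Rightarrow> (nat \<Rightarrow> nat) \<Rightarrow> nat" where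
  "descents iota J \<sigma> = card {l\<in>J. blk iota (\<sigma> l) < blk iota l}"

lemma mon_ndeg_permmon:
  assumes "finite J"
  shows "mon_ndeg iota (permmon J \<sigma>) = descents iota J \<sigma>"
proof -
  have inj: "inj_on (\<lambda>l. (l, \<sigma> l)) J" by (rule inj_onI) simp
  have "mon_ndeg iota (permmon J \<sigma>) = (\<Sum>l\<in>J. if blk iota (\<sigma> l) < blk iota l then 1 else 0)"
    unfolding mon_ndeg_def keys_permmon[OF assms] sum.reindex[OF inj]
    by (intro sum.cong) (simp_all add: lookup_permmon[OF assms])
  then show ?thesis
    unfolding descents_def using assms by (simp add: sum.inter_filter[symmetric])
qed

lemma ndeg_Fpol:
  "ndeg iota (Fpol n j :: _ \<Rightarrow>\<^sub>0 'a::comm_ring_1)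
     = Max {descents iota J \<sigma> | J \<sigma>. J \<subseteq> {1..n} \<and> card J = j \<and> \<sigma> permutes J}"
proof -
  have fin: "finite J" if "J \<subseteq> {1..n}" for J :: "nat set" using that finite_subset by blast
  have "mon_ndeg iota ` {permmon J \<sigma> | J \<sigma>. J \<subseteq> {1..n} \<and> card J = j \<and> \<sigma> permutes J}
      = {mon_ndeg iota (permmon J \<sigma>) | J \<sigma>. J \<subseteq> {1..n} \<and> card J = j \<and> \<sigma> permutes J}"
    by blast
  also have "\<dots> = {descents iota J \<sigma> | J \<sigma>. J \<subseteq> {1..n} \<and> card J = j \<and> \<sigma> permutes J}"
    by (intro Collect_cong) (metis fin mon_ndeg_permmon)
  finally show ?thesis unfolding ndeg_def keys_Fpol by simp
qed

lemma card_eq_sum_card_fibres: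
  assumes "finite A" "finite K" "f ` A \<subseteq> K"
  shows "card A = (\<Sum>k\<in>K. card {x\<in>A. f x = k})"
  using sum.group[OF assms, of "\<lambda>_. 1::nat"] by simp

lemma descents_add_ascents:
  assumes "finite J"
  shows "descents iota J \<sigma> + card {l\<in>J. blk iota l \<le> blk iota (\<sigma> l)} = card J"
proof -
  have "card ({l\<in>J. blk iota (\<sigma> l) < blk iota l} \<union> {l\<in>J. blk iota l \<le> blk iota (\<sigma> l)})
      = descents iota J \<sigma> + card {l\<in>J. blk iota l \<le> blk iota (\<sigma> l)}"
    unfolding descents_def using assms by (intro card_Un_disjoint) auto
  moreover have "{l\<in>J. blk iota (\<sigma> l) < blk iota l} \<union> {l\<in>J. blk iota l \<le> blk iota (\<sigma> l)} = J" by auto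
  ultimately show ?thesis by simp
qed

locale blocks =
  fixes n s :: nat and iota :: "nat \<Rightarrow> nat"
  assumes s_pos: "s \<ge> 1" and iota_0: "iota 0 = 0" and iota_s: "iota s = n"
    and iota_less_Suc: "\<And>k. k < s \<Longrightarrow> iota k < iota (Suc k)"
begin

definition blkpos :: "nat \<Rightarrow> nat" where
  "blkpos x = x - iota (blk iota x - 1)"

lemma iota_less: "a < b \<Longrightarrow> b \<le> s \<Longrightarrow> iota a < iota b"
proof (induction b)
  case (Suc b)
  then show ?case using iota_less_Suc[of b] by (cases "a = b") auto
qed simp

lemma iota_mono: "a \<le> b \<Longrightarrow> b \<le> s \<Longrightarrow> iota a \<le> iota b"
  using iota_less[of a b] by (cases "a = b") auto


lemma
  assumes "x \<in> {1..n}"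
  shows blk_ge_1: "1 \<le> blk iota x" and blk_le_s: "blk iota x \<le> s"
    and iota_blk_pred_less: "iota (blk iota x - 1) < x" and le_iota_blk: "x \<le> iota (blk iota x)"
proof -
  have "x \<le> iota s" using assms iota_s by simp
  then show "x \<le> iota (blk iota x)" and "blk iota x \<le> s"
    unfolding blk_def by (auto intro: LeastI Least_le)
  then show "1 \<le> blk iota x" using assms iota_0 by (cases "blk iota x") auto
  then have "\<not> x \<le> iota (blk iota x - 1)"
    unfolding blk_def by (intro not_less_Least) (simp add: blk_def)
  then show "iota (blk iota x - 1) < x" by simp
qed

lemma blk_eqI:
  assumes "k \<in> {1..s}" "iota (k - 1) < x" "x \<le> iota k"
  shows "blk iota x = k"
  unfolding blk_def
proof (rule Least_equality)
  fix y assume "x \<le> iota y"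
  show "k \<le> y"
  proof (rule ccontr)
    assume "\<not> k \<le> y"
    then have "iota y \<le> iota (k - 1)" using assms by (intro iota_mono) auto
    then show False using assms \<open>x \<le> iota y\<close> by simp
  qed
qed (rule assms(3))

lemma blk_mono: "y \<le> x \<Longrightarrow> x \<le> n \<Longrightarrow> blk iota y \<le> blk iota x"
  unfolding blk_def using iota_s by (metis LeastI Least_le le_trans)

lemma blk_fibre_blkpos_le:
  assumes "k \<in> {1..s}"
  shows "{x\<in>{1..n}. blk iota x = k \<and> blkpos x \<le> i} = {iota (k - 1)<..iota (k - 1) + min i (blksize iota k)}"
proof -
  have bounds: "iota (k - 1) < iota k" "iota k \<le> n"
    using assms iota_less[of "k - 1" k] iota_mono[of k s] iota_s by auto
  show ?thesis
  proof (intro set_eqI iffI)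
    fix x assume "x \<in> {x\<in>{1..n}. blk iota x = k \<and> blkpos x \<le> i}"
    then show "x \<in> {iota (k - 1)<..iota (k - 1) + min i (blksize iota k)}"
      using iota_blk_pred_less[of x] le_iota_blk[of x] unfolding blkpos_def blksize_def by auto
  next
    fix x assume x: "x \<in> {iota (k - 1)<..iota (k - 1) + min i (blksize iota k)}"
    then have "iota (k - 1) < x" "x \<le> iota k" using bounds unfolding blksize_def by auto
    with assms have "blk iota x = k" by (rule blk_eqI)
    then show "x \<in> {x\<in>{1..n}. blk iota x = k \<and> blkpos x \<le> i}"
      using x bounds \<open>x \<le> iota k\<close> unfolding blkpos_def by auto
  qed
qed

lemma card_blk_fibre_le:
  assumes "J \<subseteq> {1..n}" "k \<in> {1..s}"
  shows "card {l\<in>J. blk iota l = k} \<le> blksize iota k"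
proof -
  have "{l\<in>J. blk iota l = k} \<subseteq> {iota (k - 1)<..iota k}"
    using assms(1) iota_blk_pred_less le_iota_blk by fastforce
  then have "card {l\<in>J. blk iota l = k} \<le> card {iota (k - 1)<..iota k}" by (intro card_mono) auto
  then show ?thesis unfolding blksize_def by simp
qed

lemma blkpos_bounds:
  assumes "x \<in> {1..n}"
  shows "1 \<le> blkpos x" "blkpos x \<le> imax iota s"
proof -
  have "blkpos x \<le> blksize iota (blk iota x)"
    unfolding blkpos_def blksize_def using le_iota_blk[OF assms] by simp
  also have "\<dots> \<le> imax iota s"
    unfolding imax_def using blk_ge_1[OF assms] blk_le_s[OF assms] by (intro Max_ge) auto
  finally show "blkpos x \<le> imax iota s" .
  show "1 \<le> blkpos x" unfolding blkpos_def using iota_blk_pred_less[OF assms] by simp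
qed

lemma blk_less_if_blkpos_eq:
  assumes "x \<in> {1..n}" "z \<in> {1..n}" "z < x" "blkpos z = blkpos x"
  shows "blk iota z < blk iota x"
proof -
  have "blk iota z \<noteq> blk iota x"
    using assms iota_blk_pred_less unfolding blkpos_def by force
  then show ?thesis using blk_mono[of z x] assms by fastforce
qed

lemma mseq_eq_card: "mseq iota s i = card {x\<in>{1..n}. blkpos x \<le> i}"
proof -
  have "card {x\<in>{1..n}. blkpos x \<le> i} = (\<Sum>k\<in>{1..s}. card {x\<in>{x\<in>{1..n}. blkpos x \<le> i}. blk iota x = k})"
    using blk_ge_1 blk_le_s by (intro card_eq_sum_card_fibres) auto
  also have "\<dots> = (\<Sum>k\<in>{1..s}. card {x\<in>{1..n}. blk iota x = k \<and> blkpos x \<le> i})"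
    by (intro sum.cong arg_cong[where f = card]) auto
  also have "\<dots> = mseq iota s i"
    unfolding mseq_def
  proof (intro sum.cong refl)
    fix k assume "k \<in> {1..s}"
    from blk_fibre_blkpos_le[OF this, of i]
    show "card {x\<in>{1..n}. blk iota x = k \<and> blkpos x \<le> i} = min i (blksize iota k)" by simp
  qed
  finally show ?thesis by simp
qed

lemma mseq_0: "mseq iota s 0 = 0"
  unfolding mseq_def by simp

lemma mseq_imax: "mseq iota s (imax iota s) = n"
proof -
  have "{x\<in>{1..n}. blkpos x \<le> imax iota s} = {1..n}" using blkpos_bounds by auto
  then show ?thesis unfolding mseq_eq_card by simp
qed

lemma mseq_mono: "i \<le> i' \<Longrightarrow> mseq iota s i \<le> mseq iota s i'"
  unfolding mseq_def by (intro sum_mono) auto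

lemma mseq_less_Suc:
  assumes "i < imax iota s"
  shows "mseq iota s i < mseq iota s (Suc i)"
proof -
  have "Max (blksize iota ` {1..s}) \<in> blksize iota ` {1..s}" using s_pos by (intro Max_in) auto
  then obtain k where "k \<in> {1..s}" "blksize iota k = imax iota s" unfolding imax_def by auto
  then show ?thesis
    unfolding mseq_def using assms by (intro sum_strict_mono_ex1) force+
qed

definition level :: "nat \<Rightarrow> nat" where
  "level j = (LEAST i. j \<le> mseq iota s i)"

lemma level_unique:
  assumes "mseq iota s (i - 1) < j" "j \<le> mseq iota s i"
  shows "level j = i"
  unfolding level_def
proof (rule Least_equality)
  fix i' assume "j \<le> mseq iota s i'"
  show "i \<le> i'"
  proof (rule ccontr)
    assume "\<not> i \<le> i'"
    then have "mseq iota s i' \<le> mseq iota s (i - 1)" by (intro mseq_mono) simp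
    then show False using assms \<open>j \<le> mseq iota s i'\<close> by simp
  qed
qed (rule assms(2))

lemma level_bounds:
  assumes "j \<in> {1..n}"
  shows "level j \<in> {1..imax iota s}" "mseq iota s (level j - 1) < j" "j \<le> mseq iota s (level j)"
proof -
  have "j \<le> mseq iota s (imax iota s)" using assms mseq_imax by simp
  then have le_mseq: "j \<le> mseq iota s (level j)" and le_imax: "level j \<le> imax iota s"
    unfolding level_def by (auto intro: LeastI Least_le)
  then show "j \<le> mseq iota s (level j)" by simp
  from le_mseq have "level j \<noteq> 0" using assms mseq_0 by (intro notI) simp
  with le_imax show "level j \<in> {1..imax iota s}" by simp
  have "\<not> j \<le> mseq iota s (level j - 1)"
    unfolding level_def by (rule not_less_Least) (use \<open>level j \<noteq> 0\<close> level_def in simp)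
  then show "mseq iota s (level j - 1) < j" by simp
qed

lemma level_Suc:
  assumes "j \<in> {1..n - 1}"
  shows "level (j + 1) = (if \<exists>i\<in>{0..<imax iota s}. j = mseq iota s i then level j + 1 else level j)"
proof (cases "\<exists>i\<in>{0..<imax iota s}. j = mseq iota s i")
  case True
  then obtain i where i: "i < imax iota s" "j = mseq iota s i" by auto
  with assms mseq_0 have "i \<noteq> 0" by (metis atLeastAtMost_iff not_one_le_zero)
  then have "level j = i"
    using i mseq_less_Suc[of "i - 1"] by (intro level_unique) simp_all
  moreover have "level (j + 1) = i + 1"
    using i mseq_less_Suc[of i] by (intro level_unique) simp_all
  ultimately show ?thesis using True by simp
next
  case False
  have j: "j \<in> {1..n}" using assms by auto
  have "j \<noteq> mseq iota s (level j)"
    using False level_bounds(1)[OF j] mseq_imax assms by (cases "level j = imax iota s") auto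
  then have "level (j + 1) = level j"
    using level_bounds[OF j] by (intro level_unique) auto
  then show ?thesis using False by simp
qed

lemma card_le_mseq_ascents:
  assumes J: "J \<subseteq> {1..n}" and perm: "\<sigma> permutes J"
  shows "card J \<le> mseq iota s (card {l\<in>J. blk iota l \<le> blk iota (\<sigma> l)})"
proof -
  have fin: "finite J" using J finite_subset by blast
  have "card J = (\<Sum>k\<in>{1..s}. card {l\<in>J. blk iota l = k})"
    using J blk_ge_1 blk_le_s by (intro card_eq_sum_card_fibres fin) auto
  also have "\<dots> \<le> (\<Sum>k\<in>{1..s}. min (card {l\<in>J. blk iota l \<le> blk iota (\<sigma> l)}) (blksize iota k))"
    using card_fibre_le_card_ascents[OF fin perm] card_blk_fibre_le[OF J] by (intro sum_mono) simp
  finally show ?thesis unfolding mseq_def .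
qed

lemma descents_add_level_le:
  assumes J: "J \<subseteq> {1..n}" and perm: "\<sigma> permutes J"
  shows "descents iota J \<sigma> + level (card J) \<le> card J"
proof -
  have "level (card J) \<le> card {l\<in>J. blk iota l \<le> blk iota (\<sigma> l)}"
    unfolding level_def using card_le_mseq_ascents[OF assms] by (rule Least_le)
  then show ?thesis using descents_add_ascents[of J iota \<sigma>] J finite_subset by fastforce
qed

text \<open>Orders \<open>{1..n}\<close> lexicographically by position in the block, then by decreasing index.\<close>

definition blkpos_key :: "nat \<Rightarrow> nat" where
  "blkpos_key x = blkpos x * (n + 1) + (n - x)"

lemma blkpos_key_le_imp:
  assumes "x \<le> n" "z \<le> n" "blkpos_key x \<le> blkpos_key z"
  shows "blkpos x \<le> blkpos z" and "blkpos x = blkpos z \<Longrightarrow> z \<le> x"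
proof -
  show "blkpos x \<le> blkpos z"
  proof (rule ccontr)
    assume "\<not> blkpos x \<le> blkpos z"
    then have "(blkpos z + 1) * (n + 1) \<le> blkpos x * (n + 1)" by (intro mult_le_mono1) simp
    then show False using assms(3) unfolding blkpos_key_def by simp
  qed
  show "z \<le> x" if "blkpos x = blkpos z" using that assms unfolding blkpos_key_def by simp
qed

definition blk_cycle :: "nat set \<Rightarrow> nat \<Rightarrow> nat" where
  "blk_cycle J = cycle_of_list (sort_key blkpos_key (sorted_list_of_set J))"

lemma blk_cycle_permutes:
  assumes "finite J"
  shows "blk_cycle J permutes J"
proof -
  have "set (sort_key blkpos_key (sorted_list_of_set J)) = J" using assms by simp
  then show ?thesis unfolding blk_cycle_def by (metis cycle_permutes)
qed

lemma inj_on_blkpos_blk_cycle_ascents: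
  assumes J: "J \<subseteq> {1..n}"
  shows "inj_on blkpos {l\<in>J. blk iota l \<le> blk iota (blk_cycle J l)}"
proof -
  define L where "L = sort_key blkpos_key (sorted_list_of_set J)"
  have fin: "finite J" using J finite_subset by blast
  have setL: "set L = J" and dist: "distinct L" and sorted: "sorted (map blkpos_key L)"
    unfolding L_def using fin by simp_all
  have L_in: "L ! p \<in> {1..n}" if "p < length L" for p using that setL J nth_mem by blast
  have cycle: "blk_cycle J (L ! p) = L ! Suc p" if "Suc p < length L" for p
  proof -
    have "map (blk_cycle J) L = rotate1 L"
      unfolding blk_cycle_def L_def[symmetric] using cyclic_rotation[OF dist, of 1] by simp
    then show ?thesis using that by (metis Suc_lessD nth_map nth_rotate1 mod_less)
  qed
  have no_ascent: "\<not> blk iota (L ! p) \<le> blk iota (blk_cycle J (L ! p))"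
    if pq: "p < q" "q < length L" and eq: "blkpos (L ! p) = blkpos (L ! q)" for p q
  proof -
    define x z where "x = L ! p" and "z = L ! Suc p"
    have xz: "x \<in> {1..n}" "z \<in> {1..n}" "L ! q \<in> {1..n}" unfolding x_def z_def using pq L_in by auto
    have "blkpos_key x \<le> blkpos_key z" "blkpos_key z \<le> blkpos_key (L ! q)"
      unfolding x_def z_def using pq sorted_nth_mono[OF sorted] by simp_all
    then have "blkpos z = blkpos x" "z \<le> x"
      using blkpos_key_le_imp xz eq unfolding x_def by (metis atLeastAtMost_iff le_antisym)+
    moreover have "z \<noteq> x" unfolding x_def z_def using dist pq nth_eq_iff_index_eq by fastforce
    ultimately have "blk iota z < blk iota x" using blk_less_if_blkpos_eq xz by simp
    then show ?thesis using cycle[of p] pq unfolding x_def z_def by simp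
  qed
  show ?thesis
  proof (rule inj_onI)
    fix x y assume x: "x \<in> {l\<in>J. blk iota l \<le> blk iota (blk_cycle J l)}"
      and y: "y \<in> {l\<in>J. blk iota l \<le> blk iota (blk_cycle J l)}" and eq: "blkpos x = blkpos y"
    obtain p q where "p < length L" "x = L ! p" "q < length L" "y = L ! q"
      using x y setL by (metis (no_types, lifting) in_set_conv_nth mem_Collect_eq)
    then show "x = y"
      using no_ascent[of p q] no_ascent[of q p] x y eq by (cases p q rule: linorder_cases) auto
  qed
qed

lemma ex_perm_descents_ge:
  assumes "j \<le> mseq iota s i"
  shows "\<exists>J \<sigma>. J \<subseteq> {1..n} \<and> card J = j \<and> \<sigma> permutes J \<and> j \<le> descents iota J \<sigma> + i"
proof -
  obtain J where J: "J \<subseteq> {x\<in>{1..n}. blkpos x \<le> i}" "card J = j"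
    using assms unfolding mseq_eq_card by (meson obtain_subset_with_card_n)
  then have J_sub: "J \<subseteq> {1..n}" by auto
  then have fin: "finite J" using finite_subset by blast
  have "blkpos ` {l\<in>J. blk iota l \<le> blk iota (blk_cycle J l)} \<subseteq> {1..i}"
    using J(1) blkpos_bounds(1) by fastforce
  with inj_on_blkpos_blk_cycle_ascents[OF J_sub]
  have "card {l\<in>J. blk iota l \<le> blk iota (blk_cycle J l)} \<le> card {1..i}"
    by (rule card_inj_on_le) simp
  then have "card {l\<in>J. blk iota l \<le> blk iota (blk_cycle J l)} \<le> i" by simp
  then have "j \<le> descents iota J (blk_cycle J) + i"
    using descents_add_ascents[OF fin, of iota "blk_cycle J"] J(2) by simp
  then show ?thesis using J_sub J(2) blk_cycle_permutes[OF fin] by blast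
qed

lemma ndeg_Fpol_add_level:
  assumes "j \<in> {1..n}"
  shows "ndeg iota (Fpol n j :: _ \<Rightarrow>\<^sub>0 'a::comm_ring_1) + level j = j"
proof -
  define S where "S = {descents iota J \<sigma> | J \<sigma>. J \<subseteq> {1..n} \<and> card J = j \<and> \<sigma> permutes J}"
  obtain J \<sigma> where "J \<subseteq> {1..n}" "card J = j" "\<sigma> permutes J" and ge: "j \<le> descents iota J \<sigma> + level j"
    using ex_perm_descents_ge level_bounds(3)[OF assms] by blast
  then have "descents iota J \<sigma> \<in> S" unfolding S_def by blast
  moreover have le: "d + level j \<le> j" if "d \<in> S" for d
    using that descents_add_level_le unfolding S_def by blast
  moreover have "finite S"
  proof (rule finite_subset)
    show "S \<subseteq> {..j}" using le by (meson atMost_iff le_add1 le_trans subsetI)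
  qed simp
  ultimately have "descents iota J \<sigma> \<le> Max S" "Max S + level j \<le> j"
    using Max_ge[of S] Max_in[of S] le by blast+
  with ge have "Max S + level j = j" by simp
  then show ?thesis unfolding ndeg_Fpol S_def .
qed

lemma ndeg_Fpol_1: "ndeg iota (Fpol n 1 :: _ \<Rightarrow>\<^sub>0 'a::comm_ring_1) = 0"
proof -
  have "1 \<le> n" using iota_less[of 0 s] s_pos iota_0 iota_s by simp
  then have "1 \<le> imax iota s" using level_bounds(1)[of 1] by simp
  then have "level 1 = 1"
    using mseq_0 mseq_less_Suc[of 0] by (intro level_unique) simp_all
  then show ?thesis using ndeg_Fpol_add_level[of 1] \<open>1 \<le> n\<close> by simp
qed

lemma ndeg_Fpol_Suc:
  assumes "j \<in> {1..n - 1}"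
  shows "ndeg iota (Fpol n (j + 1) :: _ \<Rightarrow>\<^sub>0 'a::comm_ring_1)
    = (if \<exists>i\<in>{0..<imax iota s}. j = mseq iota s i then ndeg iota (Fpol n j :: _ \<Rightarrow>\<^sub>0 'a)
       else ndeg iota (Fpol n j :: _ \<Rightarrow>\<^sub>0 'a) + 1)"
proof -
  have "j \<in> {1..n}" "j + 1 \<in> {1..n}" using assms by auto
  then have "ndeg iota (Fpol n j :: _ \<Rightarrow>\<^sub>0 'a) + level j = j"
    and "ndeg iota (Fpol n (j + 1) :: _ \<Rightarrow>\<^sub>0 'a) + level (j + 1) = j + 1"
    by (simp_all only: ndeg_Fpol_add_level)
  then show ?thesis using level_Suc[OF assms] by (simp split: if_splits)
qed

end

theorem mainTheorem2:
  fixes n s :: nat and iota :: "nat \<Rightarrow> nat"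
  assumes "n \<ge> 2" and "s \<ge> 2"
    and "iota 0 = 0" and "iota s = n"
    and "\<And>k. k < s \<Longrightarrow> iota k < iota (Suc k)"
  defines "D \<equiv> \<lambda>j. ndeg iota (Fpol n j :: ((nat \<times> nat) \<Rightarrow>\<^sub>0 nat) \<Rightarrow>\<^sub>0 'a::field_char_0)"
  shows "(\<forall>j\<in>{1..n}. (\<exists>!i. i \<in> {1..imax iota s} \<and> mseq iota s (i - 1) < j \<and> j \<le> mseq iota s i)
            \<and> (\<forall>i\<in>{1..imax iota s}. mseq iota s (i - 1) < j \<and> j \<le> mseq iota s i
                  \<longrightarrow> int j - int (D j) = int i))
       \<and> D 1 = 0
       \<and> (\<forall>j\<in>{1..n - 1}.
            ((\<exists>i\<in>{0..<imax iota s}. j = mseq iota s i) \<longrightarrow> D (j + 1) = D j)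
          \<and> ((\<not> (\<exists>i\<in>{0..<imax iota s}. j = mseq iota s i)) \<longrightarrow> D (j + 1) = D j + 1))"
proof -
  interpret blocks n s iota using assms by unfold_locales auto
  have D: "D j + level j = j" if "j \<in> {1..n}" for j
    unfolding D_def using ndeg_Fpol_add_level[OF that] .
  show ?thesis
  proof (intro conjI ballI impI)
    fix j assume "j \<in> {1..n}"
    then show "\<exists>!i. i \<in> {1..imax iota s} \<and> mseq iota s (i - 1) < j \<and> j \<le> mseq iota s i"
      using level_bounds level_unique by blast
  next
    fix j i assume "j \<in> {1..n}" "mseq iota s (i - 1) < j \<and> j \<le> mseq iota s i"
    then have "D j + i = j" using D level_unique by metis
    then show "int j - int (D j) = int i" by simp
  next
    show "D 1 = 0" unfolding D_def by (rule ndeg_Fpol_1)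
  next
    fix j assume j: "j \<in> {1..n - 1}" and "\<exists>i\<in>{0..<imax iota s}. j = mseq iota s i"
    then show "D (j + 1) = D j" unfolding D_def using ndeg_Fpol_Suc[OF j] by simp
  next
    fix j assume j: "j \<in> {1..n - 1}" and "\<not> (\<exists>i\<in>{0..<imax iota s}. j = mseq iota s i)"
    then show "D (j + 1) = D j + 1" unfolding D_def using ndeg_Fpol_Suc[OF j] by simp
  qed
qed

end
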